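(* Let $\mathcal{P}_{\mathrm{con}}$, $\mathcal{Q}_{\mathrm{con}}$ and $\mathcal{R}_{\mathrm{con}}$ denote the sets of isomorphism classes of finite connected permutation racks, finite connected quandles, and finite connected racks, respectively. The cartesian product induces a well-defined injective map $$\mathcal{P}_{\mathrm{con}}\times\mathcal{Q}_{\mathrm{con}}\longrightarrow\mathcal{R}_{\mathrm{con}},\qquad([C],[Q])\longmapsto[C\times Q].$$
   Context: A rack is a set $R$ with a binary operation $\rhd$ such that every left multiplication $\ell_a\colon b\mapsto a\rhd b$ is a bijection and $a\rhd(b\rhd c)=(a\rhd b)\rhd(a\rhd c)$ for all $a,b,c$; a quandle is a rack with $a\rhd a=a$ for all $a$. A permutation rack is a set $R$ with a permutation $\pi$ of $R$ and operation $a\rhd b=\pi(b)$ for all $a,b$. The product of racks is the cartesian product with componentwise operation. The inner automorphism group $\mathrm{Inn}(R)$ is the subgroup of the symmetric group on $R$ generated by all $\ell_a$; a rack is connected if it is non-empty and $\mathrm{Inn}(R)$ acts transitively on $R$. *)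

theory Defs
  imports "HOL-Algebra.Bij" "HOL-Algebra.Generated_Groups"
begin

definition rack :: "'a set \<Rightarrow> ('a \<Rightarrow> 'a \<Rightarrow> 'a) \<Rightarrow> bool" where
  "rack R op \<longleftrightarrow>
     (\<forall>a\<in>R. \<forall>b\<in>R. op a b \<in> R) \<and>
     (\<forall>a\<in>R. bij_betw (op a) R R) \<and>
     (\<forall>a\<in>R. \<forall>b\<in>R. \<forall>c\<in>R. op a (op b c) = op (op a b) (op a c))"

definition quandle :: "'a set \<Rightarrow> ('a \<Rightarrow> 'a \<Rightarrow> 'a) \<Rightarrow> bool" where
  "quandle R op \<longleftrightarrow> rack R op \<and> (\<forall>a\<in>R. op a a = a)"

definition perm_rack :: "'a set \<Rightarrow> ('a \<Rightarrow> 'a \<Rightarrow> 'a) \<Rightarrow> bool" where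
  "perm_rack R op \<longleftrightarrow>
     (\<exists>\<pi>. bij_betw \<pi> R R \<and> (\<forall>a\<in>R. \<forall>b\<in>R. op a b = \<pi> b))"

definition Inn :: "'a set \<Rightarrow> ('a \<Rightarrow> 'a \<Rightarrow> 'a) \<Rightarrow> ('a \<Rightarrow> 'a) set" where
  "Inn R op = generate (BijGroup R) ((\<lambda>a. restrict (op a) R) ` R)"

definition rack_connected :: "'a set \<Rightarrow> ('a \<Rightarrow> 'a \<Rightarrow> 'a) \<Rightarrow> bool" where
  "rack_connected R op \<longleftrightarrow> R \<noteq> {} \<and> (\<forall>x\<in>R. \<forall>y\<in>R. \<exists>g\<in>Inn R op. g x = y)"

definition prod_op :: "('a \<Rightarrow> 'a \<Rightarrow> 'a) \<Rightarrow> ('b \<Rightarrow> 'b \<Rightarrow> 'b) \<Rightarrow> ('a \<times> 'b) \<Rightarrow> ('a \<times> 'b) \<Rightarrow> ('a \<times> 'b)" where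
  "prod_op op1 op2 = (\<lambda>(a, b) (c, d). (op1 a c, op2 b d))"

definition rack_iso :: "'a set \<Rightarrow> ('a \<Rightarrow> 'a \<Rightarrow> 'a) \<Rightarrow> 'b set \<Rightarrow> ('b \<Rightarrow> 'b \<Rightarrow> 'b) \<Rightarrow> bool" where
  "rack_iso R1 op1 R2 op2 \<longleftrightarrow>
     (\<exists>f. bij_betw f R1 R2 \<and> (\<forall>a\<in>R1. \<forall>b\<in>R1. f (op1 a b) = op2 (f a) (f b)))"

end

theory Submission
  imports Defs
begin

(* Let C be a permutation rack with permutation \<pi> and Q a quandle. In C \<times> Q the left
   multiplication by (a, b) is (x, y) \<mapsto> (\<pi> x, b \<rhd> y). A rack is connected iff every function
   invariant under all left multiplications is constant on it. If k is such a function on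
   C \<times> Q, multiplying (x, y) by itself gives k (\<pi> x, y) = k (x, y), so k does not depend on
   the first coordinate since C is connected; multiplying (x, y) by (x, b) then shows that
   k (x, -) is invariant under b \<rhd> -, so it is constant since Q is connected.
   The same invariance argument, applied to the two coordinates of a homomorphism
   f : C1 \<times> Q1 \<rightarrow> C2 \<times> Q2, shows f (a, b) = (h a, g b); then h and g are homomorphisms, and
   bijective when f is. Finiteness is only used for the finiteness of C1 \<times> Q1. *)

lemma prod_op_apply [simp]: "prod_op op1 op2 (a, b) (c, d) = (op1 a c, op2 b d)"
  by (simp add: prod_op_def)

lemma rack_closed: "rack R op \<Longrightarrow> a \<in> R \<Longrightarrow> b \<in> R \<Longrightarrow> op a b \<in> R"
  unfolding rack_def by blast

lemma rack_left_mult_bij: "rack R op \<Longrightarrow> a \<in> R \<Longrightarrow> bij_betw (op a) R R"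
  unfolding rack_def by blast

lemma rack_self_distrib:
  "rack R op \<Longrightarrow> a \<in> R \<Longrightarrow> b \<in> R \<Longrightarrow> x \<in> R \<Longrightarrow> op a (op b x) = op (op a b) (op a x)"
  unfolding rack_def by blast

lemma quandle_idem: "quandle R op \<Longrightarrow> a \<in> R \<Longrightarrow> op a a = a"
  by (simp add: quandle_def)

lemma quandle_rack: "quandle R op \<Longrightarrow> rack R op"
  by (simp add: quandle_def)

lemma perm_rack_left_mult_indep:
  "perm_rack R op \<Longrightarrow> a \<in> R \<Longrightarrow> a' \<in> R \<Longrightarrow> b \<in> R \<Longrightarrow> op a b = op a' b"
  by (auto simp: perm_rack_def)

lemma rack_left_mult_Bij: "rack R op \<Longrightarrow> a \<in> R \<Longrightarrow> restrict (op a) R \<in> Bij R"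
  unfolding rack_def Bij_def by (auto intro: bij_betw_cong[THEN iffD1, rotated])

lemma carrier_BijGroup [simp]: "carrier (BijGroup S) = Bij S"
  by (simp add: BijGroup_def)

lemma Bij_apply_closed: "g \<in> Bij S \<Longrightarrow> x \<in> S \<Longrightarrow> g x \<in> S"
  using Bij_imp_funcset by blast

lemma BijGroup_mult_apply:
  "g \<in> Bij S \<Longrightarrow> h \<in> Bij S \<Longrightarrow> x \<in> S \<Longrightarrow> (g \<otimes>\<^bsub>BijGroup S\<^esub> h) x = g (h x)"
  by (simp add: BijGroup_def compose_eq)

lemma BijGroup_inv_apply:
  assumes "g \<in> Bij S" "x \<in> S"
  shows "(inv\<^bsub>BijGroup S\<^esub> g) (g x) = x" and "g ((inv\<^bsub>BijGroup S\<^esub> g) x) = x"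
  using assms by (auto simp: inv_BijGroup Bij_def bij_betw_def f_inv_into_f)

lemma BijGroup_inv_Bij: "g \<in> Bij S \<Longrightarrow> inv\<^bsub>BijGroup S\<^esub> g \<in> Bij S"
  by (simp add: inv_BijGroup restrict_inv_into_Bij)

lemma Inn_subgroup: "rack R op \<Longrightarrow> subgroup (Inn R op) (BijGroup R)"
  unfolding Inn_def
  by (rule group.generate_is_subgroup[OF group_BijGroup]) (auto intro: rack_left_mult_Bij)

lemma Inn_Bij: "rack R op \<Longrightarrow> g \<in> Inn R op \<Longrightarrow> g \<in> Bij R"
  using subgroup.subset[OF Inn_subgroup] by auto

lemma left_mult_Inn: "a \<in> R \<Longrightarrow> restrict (op a) R \<in> Inn R op"
  unfolding Inn_def by (blast intro: generate.incl)

lemma Inn_preserves_invariant: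
  assumes R: "rack R op" and k: "\<And>a x. a \<in> R \<Longrightarrow> x \<in> R \<Longrightarrow> k (op a x) = k x"
    and g: "g \<in> Inn R op"
  shows "\<forall>x\<in>R. k (g x) = k x"
  using g unfolding Inn_def
proof (induction g rule: generate.induct)
  case one
  then show ?case by (simp add: BijGroup_def)
next
  case (incl h)
  then obtain a where "a \<in> R" "h = restrict (op a) R" by blast
  then show ?case using k by simp
next
  case (inv h)
  then obtain a where a: "a \<in> R" "h = restrict (op a) R" by blast
  have "k ((inv\<^bsub>BijGroup R\<^esub> h) x) = k x" if x: "x \<in> R" for x
  proof -
    have hB: "h \<in> Bij R" using rack_left_mult_Bij[OF R a(1)] a(2) by simp
    define y where "y = (inv\<^bsub>BijGroup R\<^esub> h) x"
    have y: "y \<in> R" unfolding y_def using Bij_apply_closed[OF BijGroup_inv_Bij[OF hB] x] .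
    have "op a y = x" using BijGroup_inv_apply(2)[OF hB x] y a(2) by (simp add: y_def)
    then show ?thesis using k[OF a(1) y] by (simp add: y_def)
  qed
  then show ?case by blast
next
  case (eng h1 h2)
  then have "h1 \<in> Bij R" "h2 \<in> Bij R" using Inn_Bij[OF R] by (auto simp: Inn_def)
  then show ?case using eng.IH by (simp add: BijGroup_mult_apply Bij_apply_closed)
qed

lemma rack_connected_invariant_eq:
  assumes "rack R op" "rack_connected R op"
    and "\<And>a x. a \<in> R \<Longrightarrow> x \<in> R \<Longrightarrow> k (op a x) = k x" and "x \<in> R" "y \<in> R"
  shows "k x = k y"
proof -
  obtain g where g: "g \<in> Inn R op" "g x = y"
    using assms(2,4,5) unfolding rack_connected_def by blast
  have "k (g x) = k x" using Inn_preserves_invariant[OF assms(1,3) g(1)] assms(4) by blast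
  then show ?thesis using g(2) by simp
qed

lemma Inn_orbit_left_mult_iff:
  assumes R: "rack R op" and a: "a \<in> R" and x: "x \<in> R" and p: "p \<in> R"
  shows "(\<exists>g\<in>Inn R op. g x = op a p) \<longleftrightarrow> (\<exists>g\<in>Inn R op. g x = p)"
proof
  let ?G = "BijGroup R" and ?h = "restrict (op a) R"
  have Inn: "subgroup (Inn R op) ?G" using Inn_subgroup[OF R] .
  have h: "?h \<in> Inn R op" "?h \<in> Bij R" using left_mult_Inn[OF a] rack_left_mult_Bij[OF R a] .
  show "\<exists>g\<in>Inn R op. g x = p" if "\<exists>g\<in>Inn R op. g x = op a p"
  proof -
    from that obtain g where g: "g \<in> Inn R op" "g x = op a p" by blast
    have "inv\<^bsub>?G\<^esub> ?h \<otimes>\<^bsub>?G\<^esub> g \<in> Inn R op"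
      using subgroup.m_closed[OF Inn subgroup.m_inv_closed[OF Inn h(1)] g(1)] .
    moreover have "(inv\<^bsub>?G\<^esub> ?h \<otimes>\<^bsub>?G\<^esub> g) x = p"
      using BijGroup_mult_apply[OF BijGroup_inv_Bij[OF h(2)] Inn_Bij[OF R g(1)] x]
        BijGroup_inv_apply(1)[OF h(2) p] g(2) p by simp
    ultimately show ?thesis by blast
  qed
  show "\<exists>g\<in>Inn R op. g x = op a p" if "\<exists>g\<in>Inn R op. g x = p"
  proof -
    from that obtain g where g: "g \<in> Inn R op" "g x = p" by blast
    have "?h \<otimes>\<^bsub>?G\<^esub> g \<in> Inn R op"
      using subgroup.m_closed[OF Inn h(1) g(1)] .
    moreover have "(?h \<otimes>\<^bsub>?G\<^esub> g) x = op a p"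
      using BijGroup_mult_apply[OF h(2) Inn_Bij[OF R g(1)] x] g(2) p by simp
    ultimately show ?thesis by blast
  qed
qed

lemma rack_connectedI_invariant:
  assumes R: "rack R op" "R \<noteq> {}"
    and const: "\<And>k :: 'a \<Rightarrow> bool. (\<And>a x. a \<in> R \<Longrightarrow> x \<in> R \<Longrightarrow> k (op a x) = k x) \<Longrightarrow>
                  \<forall>x\<in>R. \<forall>y\<in>R. k x = k y"
  shows "rack_connected R op"
  unfolding rack_connected_def
proof (intro conjI ballI)
  fix x y assume x: "x \<in> R" and y: "y \<in> R"
  let ?orbit = "\<lambda>p. \<exists>g\<in>Inn R op. g x = p"
  have "?orbit x"
  proof
    show "\<one>\<^bsub>BijGroup R\<^esub> \<in> Inn R op" using subgroup.one_closed[OF Inn_subgroup[OF R(1)]] .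
    show "\<one>\<^bsub>BijGroup R\<^esub> x = x" using x by (simp add: BijGroup_def)
  qed
  moreover have "?orbit x = ?orbit y"
    using const[of ?orbit, OF Inn_orbit_left_mult_iff[OF R(1) _ x]] x y by blast
  ultimately show "?orbit y" by blast
qed (use R in simp)

lemma rack_prod:
  assumes C: "rack C c" and Q: "rack Q q"
  shows "rack (C \<times> Q) (prod_op c q)"
  unfolding rack_def
proof (intro conjI ballI)
  fix p p' p'' assume "p \<in> C \<times> Q" "p' \<in> C \<times> Q" "p'' \<in> C \<times> Q"
  then obtain a b a' b' a'' b'' where p: "p = (a, b)" "p' = (a', b')" "p'' = (a'', b'')"
    and C_mem: "a \<in> C" "a' \<in> C" "a'' \<in> C" and Q_mem: "b \<in> Q" "b' \<in> Q" "b'' \<in> Q" by blast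
  show "prod_op c q p p' \<in> C \<times> Q"
    using p C_mem Q_mem by (simp add: rack_closed[OF C] rack_closed[OF Q])
  show "prod_op c q p (prod_op c q p' p'') = prod_op c q (prod_op c q p p') (prod_op c q p p'')"
    using p rack_self_distrib[OF C C_mem] rack_self_distrib[OF Q Q_mem] by simp
next
  fix p assume "p \<in> C \<times> Q"
  then obtain a b where ab: "p = (a, b)" "a \<in> C" "b \<in> Q" by blast
  have "prod_op c q p = map_prod (c a) (q b)" using ab(1) by (simp add: fun_eq_iff)
  then show "bij_betw (prod_op c q p) (C \<times> Q) (C \<times> Q)"
    using bij_betw_map_prod[OF rack_left_mult_bij[OF C ab(2)] rack_left_mult_bij[OF Q ab(3)]] by simp
qed

lemma rack_connected_prod_perm_rack_quandle:
  assumes C: "rack C c" "perm_rack C c" "rack_connected C c"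
    and Q: "quandle Q q" "rack_connected Q q"
  shows "rack_connected (C \<times> Q) (prod_op c q)"
proof (rule rack_connectedI_invariant)
  have rQ: "rack Q q" using quandle_rack[OF Q(1)] .
  then show "rack (C \<times> Q) (prod_op c q)" using rack_prod[OF C(1)] by blast
  show "C \<times> Q \<noteq> {}" using C(3) Q(2) by (simp add: rack_connected_def)
  fix k :: "'a \<times> 'b \<Rightarrow> bool"
  assume k: "\<And>p p'. p \<in> C \<times> Q \<Longrightarrow> p' \<in> C \<times> Q \<Longrightarrow> k (prod_op c q p p') = k p'"
  have first: "k (x', y) = k (x, y)" if "x \<in> C" "x' \<in> C" "y \<in> Q" for x x' y
  proof (rule rack_connected_invariant_eq[OF C(1,3), where k = "\<lambda>x. k (x, y)"])
    fix a x assume "a \<in> C" "x \<in> C"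
    have "prod_op c q (x, y) (x, y) = (c a x, y)"
      using perm_rack_left_mult_indep[OF C(2) \<open>x \<in> C\<close> \<open>a \<in> C\<close> \<open>x \<in> C\<close>]
        quandle_idem[OF Q(1) \<open>y \<in> Q\<close>]
      by simp
    then show "k (c a x, y) = k (x, y)" using k[of "(x, y)" "(x, y)"] \<open>x \<in> C\<close> \<open>y \<in> Q\<close> by simp
  qed fact+
  have second: "k (x, y') = k (x, y)" if "x \<in> C" "y \<in> Q" "y' \<in> Q" for x y y'
  proof (rule rack_connected_invariant_eq[OF rQ Q(2), where k = "\<lambda>y. k (x, y)"])
    fix b y assume "b \<in> Q" "y \<in> Q"
    have "k (x, q b y) = k (c x x, q b y)"
      using first[of x "c x x" "q b y"] rack_closed[OF C(1)] rack_closed[OF rQ]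
        \<open>x \<in> C\<close> \<open>b \<in> Q\<close> \<open>y \<in> Q\<close>
      by simp
    also have "\<dots> = k (x, y)"
      using k[of "(x, b)" "(x, y)"] \<open>x \<in> C\<close> \<open>b \<in> Q\<close> \<open>y \<in> Q\<close> by simp
    finally show "k (x, q b y) = k (x, y)" .
  qed fact+
  show "\<forall>p\<in>C \<times> Q. \<forall>p'\<in>C \<times> Q. k p = k p'"
  proof (clarify)
    fix x y x' y' assume "x \<in> C" "y \<in> Q" "x' \<in> C" "y' \<in> Q"
    then show "k (x, y) = k (x', y')" using first[of x x' y] second[of x' y y'] by simp
  qed
qed

lemma bij_betw_map_prodD:
  assumes hg: "bij_betw (map_prod h g) (A \<times> B) (C \<times> D)" and "A \<noteq> {}" "B \<noteq> {}"
  shows "bij_betw h A C" "bij_betw g B D"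
proof -
  have "h ` A \<times> g ` B = C \<times> D"
    using hg by (metis bij_betw_imp_surj_on map_prod_surj_on)
  then have surj: "h ` A = C" "g ` B = D" using assms(2,3) by (auto simp: times_eq_iff)
  obtain a0 b0 where "a0 \<in> A" "b0 \<in> B" using assms(2,3) by blast
  have "inj_on h A"
  proof (rule inj_onI)
    fix a a' assume "a \<in> A" "a' \<in> A" "h a = h a'"
    then show "a = a'"
      using bij_betw_imp_inj_on[OF hg] \<open>b0 \<in> B\<close> by (auto dest: inj_onD[of _ _ "(a, b0)" "(a', b0)"])
  qed
  moreover have "inj_on g B"
  proof (rule inj_onI)
    fix b b' assume "b \<in> B" "b' \<in> B" "g b = g b'"
    then show "b = b'"
      using bij_betw_imp_inj_on[OF hg] \<open>a0 \<in> A\<close> by (auto dest: inj_onD[of _ _ "(a0, b)" "(a0, b')"])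
  qed
  ultimately show "bij_betw h A C" "bij_betw g B D" using surj by (auto simp: bij_betw_def)
qed

lemma rack_iso_prod:
  assumes "rack_iso C1 c1 C2 c2" "rack_iso Q1 q1 Q2 q2"
  shows "rack_iso (C1 \<times> Q1) (prod_op c1 q1) (C2 \<times> Q2) (prod_op c2 q2)"
proof -
  obtain h where h: "bij_betw h C1 C2" "\<forall>a\<in>C1. \<forall>b\<in>C1. h (c1 a b) = c2 (h a) (h b)"
    using assms(1) by (auto simp: rack_iso_def)
  obtain g where g: "bij_betw g Q1 Q2" "\<forall>a\<in>Q1. \<forall>b\<in>Q1. g (q1 a b) = q2 (g a) (g b)"
    using assms(2) by (auto simp: rack_iso_def)
  have "bij_betw (map_prod h g) (C1 \<times> Q1) (C2 \<times> Q2)"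
    using h(1) g(1) by (rule bij_betw_map_prod)
  moreover have "map_prod h g (prod_op c1 q1 p p') = prod_op c2 q2 (map_prod h g p) (map_prod h g p')"
    if "p \<in> C1 \<times> Q1" "p' \<in> C1 \<times> Q1" for p p'
    using that h(2) g(2) by (auto simp: prod_op_def)
  ultimately show ?thesis unfolding rack_iso_def by blast
qed

lemma prod_hom_splits:
  assumes C1: "rack C1 c1" "perm_rack C1 c1" "rack_connected C1 c1"
    and Q1: "quandle Q1 q1" "rack_connected Q1 q1"
    and C2: "perm_rack C2 c2" and Q2: "quandle Q2 q2"
    and f: "f \<in> C1 \<times> Q1 \<rightarrow> C2 \<times> Q2"
    and hom: "\<And>p p'. p \<in> C1 \<times> Q1 \<Longrightarrow> p' \<in> C1 \<times> Q1 \<Longrightarrow>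
                f (prod_op c1 q1 p p') = prod_op c2 q2 (f p) (f p')"
  obtains h g where "\<And>a b. a \<in> C1 \<Longrightarrow> b \<in> Q1 \<Longrightarrow> f (a, b) = (h a, g b)"
proof -
  have f_in: "fst (f (a, b)) \<in> C2" "snd (f (a, b)) \<in> Q2" if "a \<in> C1" "b \<in> Q1" for a b
    using funcset_mem[OF f, of "(a, b)"] that by auto
  have hom_apply: "f (c1 a a', q1 b b') =
      (c2 (fst (f (a, b))) (fst (f (a', b'))), q2 (snd (f (a, b))) (snd (f (a', b'))))"
    if "a \<in> C1" "b \<in> Q1" "a' \<in> C1" "b' \<in> Q1" for a b a' b'
    using hom[of "(a, b)" "(a', b')"] that by (simp add: prod_op_def split_beta)
  have snd_indep: "snd (f (a', b)) = snd (f (a, b))" if "a \<in> C1" "a' \<in> C1" "b \<in> Q1" for a a' b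
  proof (rule rack_connected_invariant_eq[OF C1(1,3), where k = "\<lambda>a. snd (f (a, b))"])
    fix x a assume x: "x \<in> C1" and a: "a \<in> C1"
    have "snd (f (c1 x a, b)) = q2 (snd (f (a, b))) (snd (f (a, b)))"
      using hom_apply[OF a \<open>b \<in> Q1\<close> a \<open>b \<in> Q1\<close>] perm_rack_left_mult_indep[OF C1(2) x a a]
        quandle_idem[OF Q1(1) \<open>b \<in> Q1\<close>]
      by simp
    also have "\<dots> = snd (f (a, b))" using quandle_idem[OF Q2 f_in(2)[OF a \<open>b \<in> Q1\<close>]] .
    finally show "snd (f (c1 x a, b)) = snd (f (a, b))" .
  qed fact+
  have fst_indep: "fst (f (a, b')) = fst (f (a, b))" if "a \<in> C1" "b \<in> Q1" "b' \<in> Q1" for a b b'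
  proof (rule rack_connected_invariant_eq[OF quandle_rack[OF Q1(1)] Q1(2),
        where k = "\<lambda>b. fst (f (a, b))"])
    fix e b assume e: "e \<in> Q1" and b: "b \<in> Q1"
    \<comment> \<open>Write \<open>a = a' \<rhd> a'\<close>; then \<open>(a, e \<rhd> b) = (a', e) \<rhd> (a', b)\<close>,
      and in \<open>C2\<close> the left factor is ignored.\<close>
    obtain a' where a': "a' \<in> C1" "c1 a a' = a"
      using bij_betw_imp_surj_on[OF rack_left_mult_bij[OF C1(1) \<open>a \<in> C1\<close>]] \<open>a \<in> C1\<close>
      by (metis imageE)
    then have a'a': "c1 a' a' = a"
      using perm_rack_left_mult_indep[OF C1(2) a'(1) \<open>a \<in> C1\<close> a'(1)] by simp
    have "fst (f (a, q1 e b)) = c2 (fst (f (a', e))) (fst (f (a', b)))"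
      using hom_apply[OF a'(1) e a'(1) b] a'a' by simp
    also have "\<dots> = c2 (fst (f (a', b))) (fst (f (a', b)))"
      using perm_rack_left_mult_indep[OF C2 f_in(1)[OF a'(1) e] f_in(1)[OF a'(1) b]
          f_in(1)[OF a'(1) b]] .
    also have "\<dots> = fst (f (a, b))"
      using hom_apply[OF a'(1) b a'(1) b] a'a' quandle_idem[OF Q1(1) b] by simp
    finally show "fst (f (a, q1 e b)) = fst (f (a, b))" .
  qed fact+
  obtain a0 b0 where "a0 \<in> C1" "b0 \<in> Q1"
    using C1(3) Q1(2) by (auto simp: rack_connected_def)
  then have "f (a, b) = (fst (f (a, b0)), snd (f (a0, b)))" if "a \<in> C1" "b \<in> Q1" for a b
    using fst_indep[OF that(1) that(2) \<open>b0 \<in> Q1\<close>] snd_indep[OF \<open>a0 \<in> C1\<close> that(1) that(2)]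
    by (metis prod.collapse)
  then show thesis by (rule that)
qed

lemma rack_iso_prod_perm_rack_quandleD:
  assumes C1: "rack C1 c1" "perm_rack C1 c1" "rack_connected C1 c1"
    and Q1: "quandle Q1 q1" "rack_connected Q1 q1"
    and C2: "perm_rack C2 c2" and Q2: "quandle Q2 q2"
    and iso: "rack_iso (C1 \<times> Q1) (prod_op c1 q1) (C2 \<times> Q2) (prod_op c2 q2)"
  shows "rack_iso C1 c1 C2 c2 \<and> rack_iso Q1 q1 Q2 q2"
proof -
  obtain f where f: "bij_betw f (C1 \<times> Q1) (C2 \<times> Q2)"
    and hom: "\<And>p p'. p \<in> C1 \<times> Q1 \<Longrightarrow> p' \<in> C1 \<times> Q1 \<Longrightarrow>
                f (prod_op c1 q1 p p') = prod_op c2 q2 (f p) (f p')"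
    using iso unfolding rack_iso_def by blast
  obtain h g where split: "\<And>a b. a \<in> C1 \<Longrightarrow> b \<in> Q1 \<Longrightarrow> f (a, b) = (h a, g b)"
    using prod_hom_splits[OF C1 Q1 C2 Q2 bij_betw_imp_funcset[OF f] hom] by blast
  obtain a0 b0 where a0: "a0 \<in> C1" and b0: "b0 \<in> Q1"
    using C1(3) Q1(2) by (auto simp: rack_connected_def)
  have "bij_betw (map_prod h g) (C1 \<times> Q1) (C2 \<times> Q2)"
    using f by (rule bij_betw_cong[THEN iffD1, rotated]) (auto simp: split)
  then have "bij_betw h C1 C2" "bij_betw g Q1 Q2"
    using bij_betw_map_prodD a0 b0 by blast+
  moreover have "h (c1 x y) = c2 (h x) (h y)" if "x \<in> C1" "y \<in> C1" for x y
    using hom[of "(x, b0)" "(y, b0)"] split that b0 rack_closed[OF C1(1)] quandle_idem[OF Q1(1) b0]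
    by simp
  moreover have "g (q1 x y) = q2 (g x) (g y)" if "x \<in> Q1" "y \<in> Q1" for x y
    using hom[of "(a0, x)" "(a0, y)"] split that a0 rack_closed[OF C1(1)]
      rack_closed[OF quandle_rack[OF Q1(1)]]
    by simp
  ultimately show ?thesis unfolding rack_iso_def by blast
qed

theorem theorem7p11:
  fixes C1 :: "'a set" and c1 :: "'a \<Rightarrow> 'a \<Rightarrow> 'a"
    and Q1 :: "'b set" and q1 :: "'b \<Rightarrow> 'b \<Rightarrow> 'b"
    and C2 :: "'c set" and c2 :: "'c \<Rightarrow> 'c \<Rightarrow> 'c"
    and Q2 :: "'d set" and q2 :: "'d \<Rightarrow> 'd \<Rightarrow> 'd"
  assumes "finite C1" "rack C1 c1" "perm_rack C1 c1" "rack_connected C1 c1"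
      and "finite Q1" "quandle Q1 q1" "rack_connected Q1 q1"
      and "finite C2" "rack C2 c2" "perm_rack C2 c2" "rack_connected C2 c2"
      and "finite Q2" "quandle Q2 q2" "rack_connected Q2 q2"
  shows "finite (C1 \<times> Q1) \<and> rack (C1 \<times> Q1) (prod_op c1 q1)
           \<and> rack_connected (C1 \<times> Q1) (prod_op c1 q1)
         \<and> (rack_iso (C1 \<times> Q1) (prod_op c1 q1) (C2 \<times> Q2) (prod_op c2 q2)
              \<longleftrightarrow> rack_iso C1 c1 C2 c2 \<and> rack_iso Q1 q1 Q2 q2)"
  using assms rack_prod[OF assms(2) quandle_rack[OF assms(6)]]
    rack_connected_prod_perm_rack_quandle[OF assms(2-4,6,7)]
    rack_iso_prod_perm_rack_quandleD[OF assms(2-4,6,7,10,13)] rack_iso_prod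
  by blast

end
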